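(* Let $n=1$ and let $f$ be a Lagrange function of finite order whose Euler–Lagrange expressions $e^1[f],\dots,e^m[f]$ all have order at most $S$ (i.e. depend only on $x$ and $w^j_r$ with $r\le S$). If $S=2K$ is even, then there is a Lagrange function $g$ of order at most $K$ with $e^j[g]=e^j[f]$ for all $j$. If $S=2K+1$ is odd, then there are functions $g_0,g_1,\dots,g_m$ of order at most $K$ such that $e^j[f]=e^j\big[g_0+\sum_{k=1}^m g_k\,w^k_{K+1}\big]$ for all $j$.
   Context: One independent variable $x$, dependent variables $w^1,\dots,w^m$; jet coordinates $w^j_r$ ($r\ge 0$, $w^j_0=w^j$) standing for $d^rw^j/dx^r$. A function "of order at most $K$" is a $C^\infty$ function of $x$ and $w^j_r$ with $r\le K$; all functions are defined on the whole corresponding Euclidean space. $\frac{d}{dx}=\partial_x+\sum_{j,r}w^j_{r+1}\partial_{w^j_r}$ and $e^j[f]=\sum_r(-1)^r\frac{d^r}{dx^r}\frac{\partial f}{\partial w^j_r}$. *)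

theory Defs
  imports "HOL-Analysis.Analysis" "HOL-Library.Groups_Big_Fun"
begin

text \<open>Jet coordinates: X is the independent variable x, W j r stands for w^j_r.
  A point of jet space assigns a real value to every coordinate; a function on jet space
  is a map from such points to the reals (only finitely many coordinates will matter).\<close>

datatype coord = X | W nat nat

type_synonym jpt = "coord \<Rightarrow> real"

definition pd :: "coord \<Rightarrow> (jpt \<Rightarrow> real) \<Rightarrow> jpt \<Rightarrow> real" where
  "pd c f p = deriv (\<lambda>t. f (p(c := t))) (p c)"

fun ipd :: "coord list \<Rightarrow> (jpt \<Rightarrow> real) \<Rightarrow> jpt \<Rightarrow> real" where
  "ipd [] f = f"
| "ipd (c # cs) f = pd c (ipd cs f)"

text \<open>C^infinity: all iterated partial derivatives exist everywhere and are continuous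
  (product topology on jet space; for functions depending on finitely many coordinates this is
  ordinary continuity in those coordinates).\<close>
definition smooth_jet :: "(jpt \<Rightarrow> real) \<Rightarrow> bool" where
  "smooth_jet f \<longleftrightarrow>
     (\<forall>cs c p. (\<lambda>t. ipd cs f (p(c := t))) differentiable (at (p c))) \<and>
     (\<forall>cs. continuous_on UNIV (ipd cs f))"

definition order_le :: "nat \<Rightarrow> nat \<Rightarrow> (jpt \<Rightarrow> real) \<Rightarrow> bool" where
  "order_le m K f \<longleftrightarrow> smooth_jet f \<and>
     (\<forall>p q. p X = q X \<and> (\<forall>j\<in>{1..m}. \<forall>r\<le>K. p (W j r) = q (W j r)) \<longrightarrow> f p = f q)"

definition finite_order :: "nat \<Rightarrow> (jpt \<Rightarrow> real) \<Rightarrow> bool" where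
  "finite_order m f \<longleftrightarrow> (\<exists>K. order_le m K f)"

text \<open>Total derivative d/dx = \<partial>_x + \<Sum>_{j,r} w^j_{r+1} \<partial>_{w^j_r}
  (the sum over r has finitely many nonzero terms for functions of finite order).\<close>
definition Dx :: "nat \<Rightarrow> (jpt \<Rightarrow> real) \<Rightarrow> jpt \<Rightarrow> real" where
  "Dx m f p = pd X f p +
     (\<Sum>j=1..m. Sum_any (\<lambda>r. p (W j (Suc r)) * pd (W j r) f p))"

definition EL :: "nat \<Rightarrow> nat \<Rightarrow> (jpt \<Rightarrow> real) \<Rightarrow> jpt \<Rightarrow> real" where
  "EL m j f p = Sum_any (\<lambda>r. (-1) ^ r * ((Dx m ^^ r) (pd (W j r) f)) p)"

end

theory Submission
  imports Defs
begin

(* Let f have order k and let all Euler-Lagrange expressions e^j[f] have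
   order at most S < 2k.  The coefficient of w^i_{2k} in e^j[f] is
   (-1)^k \<partial>^2 f/\<partial>w^i_k \<partial>w^j_k, so f is affine in the top derivatives:
   f = a + \<Sum>_l b_l w^l_k with a, b_l of order k-1.  If moreover S \<le> 2k-2, the
   coefficient of w^i_{2k-1} shows that the 1-form \<Sum>_l b_l dw^l_{k-1} is closed; the
   Poincare lemma (in the variables w^l_{k-1}, all other coordinates being parameters)
   gives B of order k-1 with \<partial>B/\<partial>w^l_{k-1} = b_l.  Then f - d/dx B has order k-1 and,
   total derivatives being null Lagrangians, the same Euler-Lagrange expressions.
   Iterating lowers the order of f to \<lceil>S/2\<rceil>: for S = 2K this is the claim, and for
   S = 2K+1 one more use of the affine structure gives the claimed form. *)

definition dep :: "nat \<Rightarrow> nat \<Rightarrow> (jpt \<Rightarrow> real) \<Rightarrow> bool" where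
  "dep m K f \<longleftrightarrow> (\<forall>p q. p X = q X \<and> (\<forall>j\<in>{1..m}. \<forall>r\<le>K. p (W j r) = q (W j r)) \<longrightarrow> f p = f q)"

lemma order_le_iff: "order_le m K f \<longleftrightarrow> smooth_jet f \<and> dep m K f"
  by (simp add: order_le_def dep_def)

definition jet_coords :: "nat \<Rightarrow> nat \<Rightarrow> coord set" where
  "jet_coords m K = insert X {W j r | j r. j \<in> {1..m} \<and> r \<le> K}"

lemma X_in_jet_coords [simp]: "X \<in> jet_coords m K"
  by (simp add: jet_coords_def)

lemma W_in_jet_coords [simp]: "W j r \<in> jet_coords m K \<longleftrightarrow> j \<in> {1..m} \<and> r \<le> K"
  by (auto simp: jet_coords_def)

lemma dep_alt: "dep m K f \<longleftrightarrow> (\<forall>p q. (\<forall>c\<in>jet_coords m K. p c = q c) \<longrightarrow> f p = f q)"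
  unfolding dep_def jet_coords_def by (intro iff_allI) blast

lemma depD: "dep m K f \<Longrightarrow> (\<And>c. c \<in> jet_coords m K \<Longrightarrow> p c = q c) \<Longrightarrow> f p = f q"
  unfolding dep_alt by blast

lemma depI: "(\<And>p q. (\<And>c. c \<in> jet_coords m K \<Longrightarrow> p c = q c) \<Longrightarrow> f p = f q) \<Longrightarrow> dep m K f"
  unfolding dep_alt by blast

lemma dep_mono: "K \<le> K' \<Longrightarrow> dep m K f \<Longrightarrow> dep m K' f"
  unfolding dep_def by (meson order_trans)

lemma dep_const [simp]: "dep m K (\<lambda>p. a)"
  by (simp add: dep_def)

lemma dep_coord: "c \<in> jet_coords m K \<Longrightarrow> dep m K (\<lambda>p. p c)"
  by (rule depI) simp

lemma dep_add: "dep m K f \<Longrightarrow> dep m K g \<Longrightarrow> dep m K (\<lambda>p. f p + g p)"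
  by (rule depI) (metis depD)

lemma dep_diff: "dep m K f \<Longrightarrow> dep m K g \<Longrightarrow> dep m K (\<lambda>p. f p - g p)"
  by (rule depI) (metis depD)

lemma dep_mult: "dep m K f \<Longrightarrow> dep m K g \<Longrightarrow> dep m K (\<lambda>p. f p * g p)"
  by (rule depI) (metis depD)

lemma dep_sum: "(\<And>i. i \<in> A \<Longrightarrow> dep m K (f i)) \<Longrightarrow> dep m K (\<lambda>p. \<Sum>i\<in>A. f i p)"
  by (rule depI, rule sum.cong[OF refl]) (metis depD)

definition pdiff :: "coord \<Rightarrow> (jpt \<Rightarrow> real) \<Rightarrow> bool" where
  "pdiff c f \<longleftrightarrow> (\<forall>p. (\<lambda>t. f (p(c:=t))) differentiable (at (p c)))"

lemma pd_has:
  assumes "pdiff c f"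
  shows "((\<lambda>t. f (p(c:=t))) has_field_derivative pd c f p) (at (p c))"
  using assms unfolding pdiff_def pd_def
  by (simp add: DERIV_deriv_iff_real_differentiable)

lemma pd_line:
  assumes "pdiff c f"
  shows "((\<lambda>s. f (p(c:=s))) has_field_derivative pd c f (p(c:=t))) (at t)"
  using pd_has[OF assms, of "p(c:=t)"] by simp

lemma pd_eqI:
  assumes "((\<lambda>t. f (p(c:=t))) has_field_derivative D) (at (p c))"
  shows "pd c f p = D"
  using assms unfolding pd_def by (rule DERIV_imp_deriv)

lemma pdiffI:
  assumes "\<And>p. \<exists>D. ((\<lambda>t. f (p(c:=t))) has_field_derivative D) (at (p c))"
  shows "pdiff c f"
  using assms unfolding pdiff_def real_differentiable_def by blast

lemma pd_const [simp]: "pd c (\<lambda>p. a) = (\<lambda>p. 0)"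
  by (rule ext, rule pd_eqI) simp

lemma pdiff_const [simp]: "pdiff c (\<lambda>p. a)"
  by (rule pdiffI) (auto intro: DERIV_const)

lemma coord_line: "(\<lambda>t. (p(c:=t)) d) = (if c = d then (\<lambda>t. t) else (\<lambda>t. p d))"
  by auto

lemma pd_coord [simp]: "pd c (\<lambda>p. p d) = (\<lambda>p. if c = d then 1 else 0)"
  by (rule ext, rule pd_eqI) (auto simp: coord_line)

lemma pdiff_coord [simp]: "pdiff c (\<lambda>p. p d)"
proof (rule pdiffI)
  fix p :: jpt
  show "\<exists>D. ((\<lambda>t. (p(c:=t)) d) has_field_derivative D) (at (p c))"
    by (cases "c = d") (auto simp: coord_line intro: DERIV_ident DERIV_const)
qed

lemma pdiff_add [intro]: "pdiff c f \<Longrightarrow> pdiff c g \<Longrightarrow> pdiff c (\<lambda>p. f p + g p)"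
  unfolding pdiff_def by (auto intro: differentiable_add)

lemma pdiff_mult [intro]: "pdiff c f \<Longrightarrow> pdiff c g \<Longrightarrow> pdiff c (\<lambda>p. f p * g p)"
  unfolding pdiff_def by (auto intro: differentiable_mult)

lemma pd_add: "pdiff c f \<Longrightarrow> pdiff c g \<Longrightarrow> pd c (\<lambda>p. f p + g p) = (\<lambda>p. pd c f p + pd c g p)"
  by (rule ext, rule pd_eqI) (auto intro!: derivative_eq_intros pd_has)

lemma pd_mult: "pdiff c f \<Longrightarrow> pdiff c g \<Longrightarrow>
   pd c (\<lambda>p. f p * g p) = (\<lambda>p. pd c f p * g p + f p * pd c g p)"
  by (rule ext, rule pd_eqI) (auto intro!: derivative_eq_intros pd_has)

lemma pd_lin:
  assumes "pdiff c f" "pdiff c g"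
  shows "pd c (\<lambda>p. a * f p + b * g p) = (\<lambda>p. a * pd c f p + b * pd c g p)"
  by (rule ext, rule pd_eqI) (auto intro!: derivative_eq_intros pd_has[OF assms(1)] pd_has[OF assms(2)])

lemma pdiff_sum: "(\<And>i. i \<in> A \<Longrightarrow> pdiff c (f i)) \<Longrightarrow> pdiff c (\<lambda>p. \<Sum>i\<in>A. f i p)"
  by (induction A rule: infinite_finite_induct) auto

lemma pd_sum: "(\<And>i. i \<in> A \<Longrightarrow> pdiff c (f i)) \<Longrightarrow>
   pd c (\<lambda>p. \<Sum>i\<in>A. f i p) = (\<lambda>p. \<Sum>i\<in>A. pd c (f i) p)"
proof (induction A rule: infinite_finite_induct)
  case (insert x F)
  have "pd c (\<lambda>p. \<Sum>i\<in>insert x F. f i p) = pd c (\<lambda>p. f x p + (\<Sum>i\<in>F. f i p))"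
    using insert by simp
  also have "\<dots> = (\<lambda>p. pd c (f x) p + pd c (\<lambda>p. \<Sum>i\<in>F. f i p) p)"
    using insert by (intro pd_add pdiff_sum) auto
  finally show ?case using insert by simp
qed auto

lemma pd_zero_outside:
  assumes "dep m K f" "c \<notin> jet_coords m K"
  shows "pd c f p = 0"
proof -
  have "\<And>t. f (p(c:=t)) = f p" using assms by (intro depD[OF assms(1)]) auto
  then show ?thesis by (intro pd_eqI) simp
qed

lemma dep_pd: assumes "dep m K f" shows "dep m K (pd c f)"
proof (rule depI)
  fix p q :: jpt assume pq: "\<And>c. c \<in> jet_coords m K \<Longrightarrow> p c = q c"
  show "pd c f p = pd c f q"
  proof (cases "c \<in> jet_coords m K")
    case True
    have "(\<lambda>t. f (p(c:=t))) = (\<lambda>t. f (q(c:=t)))"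
      using pq by (intro ext depD[OF assms]) auto
    then show ?thesis using True pq unfolding pd_def by simp
  next
    case False
    then show ?thesis using pd_zero_outside[OF assms] by simp
  qed
qed

lemma const_coord:
  assumes "pdiff c g" "\<And>p. pd c g p = 0"
  shows "g (p(c := t)) = g p"
proof -
  have "g (p(c := t)) = g (p(c := p c))"
    by (rule DERIV_isconst_all[of "\<lambda>s. g (p(c := s))"]) (use pd_line[OF assms(1), of p] assms(2) in auto)
  then show ?thesis by simp
qed

lemma affine_coord:
  assumes "pdiff c f" "\<And>t. pd c f (p(c := t)) = pd c f p"
  shows "f p = f (p(c := 0)) + p c * pd c f p"
proof -
  have "f (p(c := p c)) - p c * pd c f p = f (p(c := 0)) - 0 * pd c f p"
  proof (rule DERIV_isconst_all[of "\<lambda>s. f (p(c := s)) - s * pd c f p"], intro allI)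
    fix x
    have "((\<lambda>s. s * pd c f p) has_field_derivative pd c f p) (at x)"
      by (auto intro!: derivative_eq_intros)
    from DERIV_diff[OF pd_line[OF assms(1), of p x] this]
    show "((\<lambda>s. f (p(c := s)) - s * pd c f p) has_field_derivative 0) (at x)"
      using assms(2)[of x] by simp
  qed
  then show ?thesis by simp
qed

lemma ipd_append: "ipd (cs @ [c]) f = ipd cs (pd c f)"
  by (induction cs) auto

lemma smooth_jetI:
  assumes "f \<in> A" "\<And>a c. a \<in> A \<Longrightarrow> pdiff c a \<and> continuous_on UNIV a \<and> pd c a \<in> A"
  shows "smooth_jet f"
proof -
  have "ipd cs f \<in> A" for cs
    by (induction cs) (use assms in auto)
  then show ?thesis using assms unfolding smooth_jet_def pdiff_def by blast
qed

lemma smooth_pdiff: "smooth_jet f \<Longrightarrow> pdiff c f"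
  unfolding smooth_jet_def pdiff_def by (metis ipd.simps(1))

lemma smooth_cont: "smooth_jet f \<Longrightarrow> continuous_on UNIV f"
  unfolding smooth_jet_def by (metis ipd.simps(1))

lemma smooth_pd: "smooth_jet f \<Longrightarrow> smooth_jet (pd c f)"
  unfolding smooth_jet_def by (metis ipd_append)

lemma smooth_ipd: "smooth_jet f \<Longrightarrow> smooth_jet (ipd cs f)"
  by (induction cs) (auto intro: smooth_pd)

inductive_set fun_alg :: "(jpt \<Rightarrow> real) set \<Rightarrow> (jpt \<Rightarrow> real) set" for S where
  atom: "a \<in> S \<Longrightarrow> a \<in> fun_alg S"
| const: "(\<lambda>p. k) \<in> fun_alg S"
| add: "a \<in> fun_alg S \<Longrightarrow> b \<in> fun_alg S \<Longrightarrow> (\<lambda>p. a p + b p) \<in> fun_alg S"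
| mult: "a \<in> fun_alg S \<Longrightarrow> b \<in> fun_alg S \<Longrightarrow> (\<lambda>p. a p * b p) \<in> fun_alg S"

lemma fun_alg_smooth:
  assumes gen: "\<And>a c. a \<in> S \<Longrightarrow> pdiff c a \<and> continuous_on UNIV a \<and> pd c a \<in> fun_alg S"
    and "a \<in> fun_alg S"
  shows "smooth_jet a"
proof (rule smooth_jetI[of _ "fun_alg S", OF assms(2)])
  fix a c assume "a \<in> fun_alg S"
  then show "pdiff c a \<and> continuous_on UNIV a \<and> pd c a \<in> fun_alg S"
  proof (induction a arbitrary: c rule: fun_alg.induct)
    case (atom a) then show ?case using gen by auto
  next
    case (const k) then show ?case by (auto intro: fun_alg.const)
  next
    case (add a b) then show ?case
      by (auto simp: pd_add intro: fun_alg.add continuous_on_add)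
  next
    case (mult a b) then show ?case
      by (auto simp: pd_mult intro!: fun_alg.add fun_alg.mult continuous_on_mult)
  qed
qed

definition all_pds :: "(jpt \<Rightarrow> real) \<Rightarrow> (jpt \<Rightarrow> real) set" where
  "all_pds f = range (\<lambda>cs. ipd cs f)"

lemma all_pds_props:
  assumes "smooth_jet f" "a \<in> all_pds f"
  shows "pdiff c a" "continuous_on UNIV a" "pd c a \<in> all_pds f" "smooth_jet a"
  using assms smooth_ipd[OF assms(1)] smooth_pdiff smooth_cont unfolding all_pds_def
  by (auto intro: range_eqI[where x="c # _"])

lemma all_pds_self: "f \<in> all_pds f"
  unfolding all_pds_def by (metis ipd.simps(1) rangeI)

lemma smooth_fun_alg:
  assumes "smooth_jet f" "smooth_jet g" "h \<in> fun_alg (all_pds f \<union> all_pds g \<union> range (\<lambda>c p. p c))"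
  shows "smooth_jet h"
proof (rule fun_alg_smooth[OF _ assms(3)])
  fix a c assume "a \<in> all_pds f \<union> all_pds g \<union> range (\<lambda>c p. p c)"
  then show "pdiff c a \<and> continuous_on UNIV a \<and> pd c a \<in> fun_alg (all_pds f \<union> all_pds g \<union> range (\<lambda>c p. p c))"
    using all_pds_props[OF assms(1)] all_pds_props[OF assms(2)]
    by (auto intro: fun_alg.atom fun_alg.const simp: if_distrib cong: if_cong)
qed

lemma smooth_add [intro]: "smooth_jet f \<Longrightarrow> smooth_jet g \<Longrightarrow> smooth_jet (\<lambda>p. f p + g p)"
  by (rule smooth_fun_alg[of f g], assumption+)
     (rule fun_alg.add; rule fun_alg.atom; simp add: all_pds_self)

lemma smooth_mult [intro]: "smooth_jet f \<Longrightarrow> smooth_jet g \<Longrightarrow> smooth_jet (\<lambda>p. f p * g p)"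
  by (rule smooth_fun_alg[of f g], assumption+)
     (rule fun_alg.mult; rule fun_alg.atom; simp add: all_pds_self)

lemma smooth_const [simp, intro]: "smooth_jet (\<lambda>p. a)"
  by (rule smooth_jetI[of _ "{\<lambda>p. a, \<lambda>p. 0}"]) auto

lemma smooth_coord [simp, intro]: "smooth_jet (\<lambda>p. p c)"
  by (rule smooth_fun_alg[of "\<lambda>p. 0" "\<lambda>p. 0"]) (auto intro: fun_alg.atom)

lemma smooth_sum [intro]: "(\<And>i. i \<in> A \<Longrightarrow> smooth_jet (f i)) \<Longrightarrow> smooth_jet (\<lambda>p. \<Sum>i\<in>A. f i p)"
  by (induction A rule: infinite_finite_induct) auto

lemma cont_upd:
  fixes a :: "'x::topological_space \<Rightarrow> jpt"
  assumes "continuous_on S a" "continuous_on S \<phi>"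
  shows "continuous_on S (\<lambda>x. (a x)(c := \<phi> x))"
proof (rule continuous_on_coordinatewise_then_product)
  fix i
  show "continuous_on S (\<lambda>x. ((a x)(c := \<phi> x)) i)"
    using assms(2) continuous_on_product_then_coordinatewise[OF assms(1)] by (cases "i = c") simp_all
qed

lemma cont_comp_smooth:
  assumes "smooth_jet g" "continuous_on S a"
  shows "continuous_on S (\<lambda>x. g (a x))"
  using continuous_on_compose[OF assms(2) continuous_on_subset[OF smooth_cont[OF assms(1)]]]
  by (simp add: o_def)

lemma smooth_subst_const:
  assumes "smooth_jet f"
  shows "smooth_jet (\<lambda>p. f (p(c := v)))"
proof (rule smooth_jetI[of _ "insert (\<lambda>p. 0) ((\<lambda>g p. g (p(c := v))) ` all_pds f)"])
  show "(\<lambda>p. f (p(c := v))) \<in> insert (\<lambda>p. 0) ((\<lambda>g p. g (p(c := v))) ` all_pds f)"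
    using all_pds_self by blast
next
  fix a d assume "a \<in> insert (\<lambda>p. 0) ((\<lambda>g p. g (p(c := v))) ` all_pds f)"
  then consider "a = (\<lambda>p. 0)" | g where "g \<in> all_pds f" "a = (\<lambda>p. g (p(c := v)))" by blast
  then show "pdiff d a \<and> continuous_on UNIV a \<and> pd d a \<in> insert (\<lambda>p. 0) ((\<lambda>g p. g (p(c := v))) ` all_pds f)"
  proof cases
    case 1 then show ?thesis by simp
  next
    case 2
    note g = all_pds_props[OF assms 2(1)]
    have cont: "continuous_on UNIV a"
      unfolding 2(2) using g(2)
      by (intro continuous_on_compose2[OF g(2)] cont_upd continuous_on_id continuous_on_const) auto
    show ?thesis
    proof (cases "d = c")
      case True
      have "pd d a = (\<lambda>p. 0)" unfolding 2(2) True by (rule ext, rule pd_eqI) simp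
      moreover have "pdiff d a" unfolding 2(2) True by (rule pdiffI) (simp, blast intro: DERIV_const)
      ultimately show ?thesis using cont by simp
    next
      case False
      have twist: "(p(d := t))(c := v) = (p(c := v))(d := t)" for p :: jpt and t
        using False by (rule fun_upd_twist)
      have der: "((\<lambda>t. a (p(d := t))) has_field_derivative pd d g (p(c:=v))) (at (p d))" for p
        using pd_has[OF g(1)[of d], of "p(c:=v)"] False unfolding 2(2) twist by simp
      have "pd d a = (\<lambda>p. pd d g (p(c := v)))" by (rule ext, rule pd_eqI, rule der)
      moreover have "pdiff d a" using der by (intro pdiffI) blast
      ultimately show ?thesis using cont g(3)[of d] by blast
    qed
  qed
qed

section \<open>Symmetry of second partial derivatives\<close>

(* Two applications of the mean value theorem to the mixed second difference of F over
   a square of side h produce a point where F_xy and a point where F_yx agree. *)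
lemma mixed_difference_mvt:
  fixes F F1 F2 F12 F21 :: "real \<Rightarrow> real \<Rightarrow> real"
  assumes d1: "\<And>x y. ((\<lambda>x. F x y) has_field_derivative F1 x y) (at x)"
    and d2: "\<And>x y. ((\<lambda>y. F x y) has_field_derivative F2 x y) (at y)"
    and d12: "\<And>x y. ((\<lambda>y. F1 x y) has_field_derivative F12 x y) (at y)"
    and d21: "\<And>x y. ((\<lambda>x. F2 x y) has_field_derivative F21 x y) (at x)"
    and h: "h > 0"
  obtains \<xi> \<eta> \<xi>' \<eta>' where "a < \<xi>" "\<xi> < a + h" "b < \<eta>" "\<eta> < b + h"
    "a < \<xi>'" "\<xi>' < a + h" "b < \<eta>'" "\<eta>' < b + h" "F12 \<xi> \<eta> = F21 \<xi>' \<eta>'"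
proof -
  have ah: "a < a + h" "b < b + h" using h by auto
  have D1: "((\<lambda>x. F x (b+h) - F x b) has_field_derivative F1 x (b+h) - F1 x b) (at x)" for x
    by (intro DERIV_diff d1)
  have D2: "((\<lambda>y. F (a+h) y - F a y) has_field_derivative F2 (a+h) y - F2 a y) (at y)" for y
    by (intro DERIV_diff d2)
  obtain \<xi> where \<xi>: "a < \<xi>" "\<xi> < a + h"
    "(F (a+h) (b+h) - F (a+h) b) - (F a (b+h) - F a b) = (a + h - a) * (F1 \<xi> (b+h) - F1 \<xi> b)"
    using MVT2[OF ah(1) D1] by blast
  obtain \<eta> where \<eta>: "b < \<eta>" "\<eta> < b + h" "F1 \<xi> (b+h) - F1 \<xi> b = (b + h - b) * F12 \<xi> \<eta>"
    using MVT2[OF ah(2), of "\<lambda>y. F1 \<xi> y" "\<lambda>y. F12 \<xi> y"] d12 by blast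
  obtain \<eta>' where \<eta>': "b < \<eta>'" "\<eta>' < b + h"
    "(F (a+h) (b+h) - F a (b+h)) - (F (a+h) b - F a b) = (b + h - b) * (F2 (a+h) \<eta>' - F2 a \<eta>')"
    using MVT2[OF ah(2) D2] by blast
  obtain \<xi>' where \<xi>': "a < \<xi>'" "\<xi>' < a + h" "F2 (a+h) \<eta>' - F2 a \<eta>' = (a + h - a) * F21 \<xi>' \<eta>'"
    using MVT2[OF ah(1), of "\<lambda>x. F2 x \<eta>'" "\<lambda>x. F21 x \<eta>'"] d21 by blast
  have "h * (h * F12 \<xi> \<eta>) = h * (h * F21 \<xi>' \<eta>')"
    using \<xi>(3) \<eta>(3) \<eta>'(3) \<xi>'(3) by (simp add: algebra_simps)
  then have "F12 \<xi> \<eta> = F21 \<xi>' \<eta>'" using h by simp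
  then show ?thesis using that \<xi> \<eta> \<xi>' \<eta>' by blast
qed

lemma schwarz_real:
  fixes F Fx Fy Fxy Fyx :: "real \<Rightarrow> real \<Rightarrow> real"
  assumes d1: "\<And>x y. ((\<lambda>x. F x y) has_field_derivative Fx x y) (at x)"
    and d2: "\<And>x y. ((\<lambda>y. F x y) has_field_derivative Fy x y) (at y)"
    and d12: "\<And>x y. ((\<lambda>y. Fx x y) has_field_derivative Fxy x y) (at y)"
    and d21: "\<And>x y. ((\<lambda>x. Fy x y) has_field_derivative Fyx x y) (at x)"
    and c12: "isCont (\<lambda>z. Fxy (fst z) (snd z)) (a, b)"
    and c21: "isCont (\<lambda>z. Fyx (fst z) (snd z)) (a, b)"
  shows "Fxy a b = Fyx a b"
proof (rule ccontr)
  assume "Fxy a b \<noteq> Fyx a b"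
  define d where "d = \<bar>Fxy a b - Fyx a b\<bar> / 2"
  have "d > 0" using \<open>Fxy a b \<noteq> Fyx a b\<close> by (simp add: d_def)
  obtain e1 where e1: "e1 > 0" "\<And>z. dist z (a, b) < e1 \<Longrightarrow> dist (Fxy (fst z) (snd z)) (Fxy a b) < d"
    using c12 \<open>d > 0\<close> unfolding continuous_at_eps_delta by fastforce
  obtain e2 where e2: "e2 > 0" "\<And>z. dist z (a, b) < e2 \<Longrightarrow> dist (Fyx (fst z) (snd z)) (Fyx a b) < d"
    using c21 \<open>d > 0\<close> unfolding continuous_at_eps_delta by fastforce
  define h where "h = min e1 e2 / 2"
  have "h > 0" using e1 e2 by (simp add: h_def)
  have near: "dist (x, y) (a, b) < min e1 e2" if "a < x" "x < a + h" "b < y" "y < b + h" for x y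
  proof -
    have "dist (x, y) (a, b) \<le> \<bar>x - a\<bar> + \<bar>y - b\<bar>"
      using sqrt_sum_squares_le_sum_abs[of "x - a" "y - b"] by (simp add: dist_Pair_Pair dist_real_def)
    then show ?thesis using that by (auto simp: h_def min_def)
  qed
  obtain \<xi> \<eta> \<xi>' \<eta>' where box: "a < \<xi>" "\<xi> < a + h" "b < \<eta>" "\<eta> < b + h"
    "a < \<xi>'" "\<xi>' < a + h" "b < \<eta>'" "\<eta>' < b + h" and eq: "Fxy \<xi> \<eta> = Fyx \<xi>' \<eta>'"
    using mixed_difference_mvt[OF d1 d2 d12 d21 \<open>h > 0\<close>] by blast
  have "dist (Fxy \<xi> \<eta>) (Fxy a b) < d" using e1(2)[of "(\<xi>, \<eta>)"] near[of \<xi> \<eta>] box by simp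
  moreover have "dist (Fyx \<xi>' \<eta>') (Fyx a b) < d" using e2(2)[of "(\<xi>', \<eta>')"] near[of \<xi>' \<eta>'] box by simp
  ultimately show False using eq unfolding d_def dist_real_def by (auto simp: abs_if split: if_splits)
qed

lemma schwarz:
  assumes f: "smooth_jet f"
  shows "pd c (pd d f) = pd d (pd c f)"
proof (cases "c = d")
  case True then show ?thesis by simp
next
  case cd: False
  show ?thesis
  proof
    fix p :: jpt
    (* restrict f to the plane through p spanned by the coordinates c and d *)
    define P where "P = (\<lambda>x y. (p(c := x))(d := y))"
    have Ptw: "P x y = (p(d := y))(c := x)" for x y
      unfolding P_def by (rule fun_upd_twist) (use cd in auto)
    have lx: "((\<lambda>x. g (P x y)) has_field_derivative pd c g (P x y)) (at x)" if "smooth_jet g" for g x y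
      using pd_has[OF smooth_pdiff[OF that], of "P x y" c] unfolding Ptw by simp
    have ly: "((\<lambda>y. g (P x y)) has_field_derivative pd d g (P x y)) (at y)" if "smooth_jet g" for g x y
      using pd_has[OF smooth_pdiff[OF that], of "P x y" d] unfolding P_def by simp
    have cont: "isCont (\<lambda>z. g (P (fst z) (snd z))) z" if "smooth_jet g" for g z
    proof -
      have "continuous_on UNIV (\<lambda>z::real\<times>real. P (fst z) (snd z))"
        unfolding P_def by (intro cont_upd continuous_on_fst continuous_on_snd continuous_on_const continuous_on_id)
      then show ?thesis
        using cont_comp_smooth[OF that] continuous_on_eq_continuous_at[OF open_UNIV] by blast
    qed
    have "pd d (pd c f) (P (p c) (p d)) = pd c (pd d f) (P (p c) (p d))"
      by (rule schwarz_real[where F = "\<lambda>x y. f (P x y)" and Fx = "\<lambda>x y. pd c f (P x y)"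
          and Fy = "\<lambda>x y. pd d f (P x y)"]) (intro lx ly cont smooth_pd f)+
    moreover have "P (p c) (p d) = p" unfolding P_def by simp
    ultimately show "pd c (pd d f) p = pd d (pd c f) p" by simp
  qed
qed

(* The coordinate W 0 0 is not a jet coordinate of any order (the dependent variables are
   numbered from 1), so it can serve as the homotopy parameter t of the Poincare lemma;
   integrating it out over [0, 1] gives back functions on jet space. *)
definition tpar :: coord where "tpar = W 0 0"

lemma tpar_notin_jet_coords [simp]: "tpar \<notin> jet_coords m K"
  by (simp add: tpar_def)

definition tpar_free :: "(jpt \<Rightarrow> real) \<Rightarrow> bool" where
  "tpar_free f \<longleftrightarrow> (\<forall>p t. f (p(tpar := t)) = f p)"

lemma dep_tpar_free: "dep m K f \<Longrightarrow> tpar_free f"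
  unfolding tpar_free_def by (auto intro!: depD[of m K f] simp: tpar_def[symmetric])

lemma tpar_free_pd:
  assumes "tpar_free g"
  shows "tpar_free (pd d g)"
  unfolding tpar_free_def
proof (intro allI)
  fix p :: jpt and t
  show "pd d g (p(tpar := t)) = pd d g p"
  proof (cases "d = tpar")
    case True
    have "pd tpar g q = 0" for q
      by (rule pd_eqI) (use assms in \<open>simp add: tpar_free_def\<close>)
    then show ?thesis using True by simp
  next
    case False
    have "(\<lambda>s. g ((p(tpar := t))(d := s))) = (\<lambda>s. g (p(d := s)))"
    proof
      fix s
      have "(p(tpar := t))(d := s) = (p(d := s))(tpar := t)" by (rule fun_upd_twist) (use False in auto)
      then show "g ((p(tpar := t))(d := s)) = g (p(d := s))" using assms by (simp add: tpar_free_def)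
    qed
    then show ?thesis using False unfolding pd_def by simp
  qed
qed

lemma tpar_free_all_pds: "tpar_free f \<Longrightarrow> g \<in> all_pds f \<Longrightarrow> tpar_free g"
proof -
  have "tpar_free f \<Longrightarrow> tpar_free (ipd cs f)" for cs
    by (induction cs) (auto intro: tpar_free_pd)
  then show "tpar_free f \<Longrightarrow> g \<in> all_pds f \<Longrightarrow> tpar_free g"
    unfolding all_pds_def by blast
qed

(* The scaling substitution w \<mapsto> t w of the coordinate c, with t = q tpar. *)
definition tscale :: "coord \<Rightarrow> jpt \<Rightarrow> jpt" where
  "tscale c q = q(c := q tpar * q c)"

lemma tscale_derivs:
  assumes g: "\<And>d. pdiff d g" "tpar_free g" and c: "c \<noteq> tpar"
  shows "((\<lambda>t. g (tscale c (q(d := t)))) has_field_derivative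
     (if d = tpar then pd c g (tscale c q) * q c else if d = c then pd c g (tscale c q) * q tpar
      else pd d g (tscale c q))) (at (q d))"
proof (cases "d = tpar")
  case True
  have eq: "g (tscale c (q(d := t))) = g (q(c := t * q c))" for t
  proof -
    have "tscale c (q(d := t)) = (q(c := t * q c))(tpar := t)"
      unfolding tscale_def True using c by (auto simp: fun_eq_iff)
    then show ?thesis using g(2) by (simp add: tpar_free_def)
  qed
  have "((\<lambda>t. g (q(c := t * q c))) has_field_derivative pd c g (q(c := q tpar * q c)) * q c) (at (q tpar))"
    by (rule DERIV_chain2[OF pd_line[OF g(1)]]) (auto intro!: derivative_eq_intros)
  then show ?thesis unfolding eq using True by (simp add: tscale_def)
next
  case F: False
  show ?thesis
  proof (cases "d = c")
    case True
    have eq: "g (tscale c (q(d := t))) = g (q(c := q tpar * t))" for t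
      unfolding tscale_def True using c by simp
    have "((\<lambda>t. g (q(c := q tpar * t))) has_field_derivative pd c g (q(c := q tpar * q c)) * q tpar) (at (q c))"
      by (rule DERIV_chain2[OF pd_line[OF g(1)]]) (auto intro!: derivative_eq_intros)
    then show ?thesis unfolding eq using True F by (simp add: tscale_def)
  next
    case False
    have eq: "tscale c (q(d := t)) = (tscale c q)(d := t)" for t
      unfolding tscale_def using False F by (auto simp: fun_eq_iff)
    show ?thesis unfolding eq using pd_has[OF g(1), of "tscale c q" d] False F by (simp add: tscale_def)
  qed
qed

lemma tpar_free_tscale:
  assumes "tpar_free g" "c \<noteq> tpar"
  shows "g (tscale c (p(tpar := t))) = g (p(c := t * p c))"
proof -
  have "tscale c (p(tpar := t)) = (p(c := t * p c))(tpar := t)"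
    using assms(2) by (auto simp: tscale_def fun_eq_iff)
  then show ?thesis using assms(1) by (simp add: tpar_free_def)
qed

(* Scaling preserves smoothness: by the chain rule, g \<circ> tscale c and the coordinate
   functions generate an algebra closed under partial derivatives. *)
lemma smooth_tscale:
  assumes f: "smooth_jet f" "tpar_free f" and c: "c \<noteq> tpar"
  shows "smooth_jet (\<lambda>q. f (tscale c q))"
proof (rule fun_alg_smooth[of "(\<lambda>g q. g (tscale c q)) ` all_pds f \<union> range (\<lambda>d q. q d)"])
  let ?S = "(\<lambda>g q. g (tscale c q)) ` all_pds f \<union> range (\<lambda>d q. q d)"
  have cont_tscale: "continuous_on UNIV (tscale c)"
    unfolding tscale_def[abs_def]
    by (intro cont_upd continuous_on_id continuous_on_mult continuous_on_product_coordinates)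
  fix a d assume a: "a \<in> ?S"
  show "pdiff d a \<and> continuous_on UNIV a \<and> pd d a \<in> fun_alg ?S"
  proof (cases "a \<in> range (\<lambda>d q. q d)")
    case True
    then obtain e where e: "a = (\<lambda>q. q e)" by blast
    show ?thesis unfolding e by (auto intro: fun_alg.const)
  next
    case False
    then obtain g where gi: "g \<in> all_pds f" and ag: "a = (\<lambda>q. g (tscale c q))" using a by blast
    note gp = all_pds_props[OF f(1) gi]
    note der = tscale_derivs[OF gp(1) tpar_free_all_pds[OF f(2) gi] c]
    have pdeq: "pd d a = (\<lambda>q. if d = tpar then pd c g (tscale c q) * q c
        else if d = c then pd c g (tscale c q) * q tpar else pd d g (tscale c q))"
      unfolding ag by (rule ext, rule pd_eqI, rule der)
    have gen_pd: "(\<lambda>q. pd e g (tscale c q)) \<in> fun_alg ?S" for e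
      using gp(3)[of e] by (intro fun_alg.atom) blast
    have gen_coord: "(\<lambda>q. q e) \<in> fun_alg ?S" for e by (intro fun_alg.atom) blast
    have "pd d a \<in> fun_alg ?S"
      unfolding pdeq using fun_alg.mult[OF gen_pd gen_coord] gen_pd by (cases "d = tpar"; cases "d = c") auto
    moreover have "pdiff d a" unfolding ag using der by (intro pdiffI) blast
    moreover have "continuous_on UNIV a"
      unfolding ag by (rule continuous_on_compose2[OF gp(2) cont_tscale]) auto
    ultimately show ?thesis by blast
  qed
next
  show "(\<lambda>q. f (tscale c q)) \<in> fun_alg ((\<lambda>g q. g (tscale c q)) ` all_pds f \<union> range (\<lambda>d q. q d))"
    by (intro fun_alg.atom) (use all_pds_self in blast)
qed

definition tpar_integral :: "(jpt \<Rightarrow> real) \<Rightarrow> jpt \<Rightarrow> real" where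
  "tpar_integral g p = integral {0..1} (\<lambda>t. g (p(tpar := t)))"

lemma tpar_integral_cont:
  assumes "smooth_jet g"
  shows "continuous_on UNIV (tpar_integral g)"
proof -
  have "continuous_on (UNIV \<times> cbox 0 1) (\<lambda>z::jpt \<times> real. g ((fst z)(tpar := snd z)))"
    by (rule cont_comp_smooth[OF assms]) (intro cont_upd continuous_on_fst continuous_on_snd continuous_on_id)
  then have "continuous_on (UNIV \<times> cbox 0 1) (\<lambda>(x::jpt, t::real). g (x(tpar := t)))"
    by (simp add: case_prod_beta)
  from integral_continuous_on_param[OF this] show ?thesis
    unfolding tpar_integral_def by (simp add: cbox_interval)
qed

lemma tpar_integral_deriv:
  assumes g: "smooth_jet g" and d: "d \<noteq> tpar"
  shows "((\<lambda>x. tpar_integral g (p(d := x))) has_field_derivative tpar_integral (pd d g) p) (at (p d))"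
proof -
  have twist: "(p(d := x))(tpar := t) = (p(tpar := t))(d := x)" for x t
    by (rule fun_upd_twist) (use d in auto)
  have cmap: "continuous_on S (\<lambda>z::real \<times> real. (p(d := fst z))(tpar := snd z))" for S
    by (intro cont_upd continuous_on_fst continuous_on_snd continuous_on_const continuous_on_id)
  have contfx: "continuous_on (UNIV \<times> cbox 0 1) (\<lambda>(x, t). pd d g ((p(d := x))(tpar := t)))"
    using cont_comp_smooth[OF smooth_pd[OF g] cmap] by (simp add: case_prod_beta)
  have contf: "continuous_on (cbox 0 1) (\<lambda>t. g ((p(d := x))(tpar := t)))" for x
    by (rule cont_comp_smooth[OF g]) (intro cont_upd continuous_on_id continuous_on_const)
  have "((\<lambda>x. integral (cbox 0 1) (\<lambda>t. g ((p(d := x))(tpar := t)))) has_field_derivative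
        integral (cbox 0 1) (\<lambda>t. pd d g ((p(d := p d))(tpar := t)))) (at (p d) within UNIV)"
  proof (rule leibniz_rule_field_derivative[where fx = "\<lambda>x t. pd d g ((p(d := x))(tpar := t))"])
    fix x t :: real
    show "((\<lambda>x. g ((p(d := x))(tpar := t))) has_field_derivative pd d g ((p(d := x))(tpar := t))) (at x within UNIV)"
      unfolding twist using pd_line[OF smooth_pdiff[OF g], of "p(tpar := t)" d x] by simp
  next
    fix x :: real
    show "(\<lambda>t. g ((p(d := x))(tpar := t))) integrable_on cbox 0 1"
      by (rule integrable_continuous[OF contf])
  qed (use contfx in auto)
  then show ?thesis unfolding tpar_integral_def by (simp add: cbox_interval)
qed

lemma pd_tpar_integral: "smooth_jet g \<Longrightarrow> d \<noteq> tpar \<Longrightarrow> pd d (tpar_integral g) = tpar_integral (pd d g)"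
  by (rule ext, rule pd_eqI, rule tpar_integral_deriv)

lemma pd_tpar_integral_tpar: "pd tpar (tpar_integral g) = (\<lambda>p. 0)"
  by (rule ext, rule pd_eqI) (simp add: tpar_integral_def)

lemma smooth_tpar_integral:
  assumes g: "smooth_jet g"
  shows "smooth_jet (tpar_integral g)"
proof (rule smooth_jetI[of _ "insert (\<lambda>p. 0) (tpar_integral ` all_pds g)"])
  show "tpar_integral g \<in> insert (\<lambda>p. 0) (tpar_integral ` all_pds g)" using all_pds_self by blast
next
  fix a d assume "a \<in> insert (\<lambda>p. 0) (tpar_integral ` all_pds g)"
  then consider "a = (\<lambda>p. 0)" | h where "h \<in> all_pds g" "a = tpar_integral h" by blast
  then show "pdiff d a \<and> continuous_on UNIV a \<and> pd d a \<in> insert (\<lambda>p. 0) (tpar_integral ` all_pds g)"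
  proof cases
    case 1 then show ?thesis by simp
  next
    case 2
    have h: "smooth_jet h" using all_pds_props(4)[OF g 2(1)] .
    have "pdiff d (tpar_integral h)"
    proof (rule pdiffI)
      fix p
      show "\<exists>D. ((\<lambda>t. tpar_integral h (p(d := t))) has_field_derivative D) (at (p d))"
        using tpar_integral_deriv[OF h] by (cases "d = tpar") (auto simp: tpar_integral_def intro: DERIV_const)
    qed
    moreover have "pd d (tpar_integral h) \<in> insert (\<lambda>p. 0) (tpar_integral ` all_pds g)"
      using all_pds_props(3)[OF g 2(1)]
      by (cases "d = tpar") (auto simp: pd_tpar_integral_tpar pd_tpar_integral[OF h])
    ultimately show ?thesis unfolding 2(2) using tpar_integral_cont[OF h] by blast
  qed
qed

section \<open>The total derivative and null Lagrangians\<close>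

lemma Sum_any_fin:
  fixes g :: "nat \<Rightarrow> real"
  assumes "\<And>r. r > N \<Longrightarrow> g r = 0"
  shows "Sum_any g = (\<Sum>r\<le>N. g r)"
proof (rule Sum_any.expand_superset)
  show "{a. g a \<noteq> 0} \<subseteq> {..N}" using assms by (auto simp: not_le[symmetric])
qed simp

definition Dx_fin :: "nat \<Rightarrow> nat \<Rightarrow> (jpt \<Rightarrow> real) \<Rightarrow> jpt \<Rightarrow> real" where
  "Dx_fin m N f = (\<lambda>p. pd X f p + (\<Sum>j=1..m. \<Sum>r\<le>N. p (W j (Suc r)) * pd (W j r) f p))"

lemma Dx_eq:
  assumes "dep m N f"
  shows "Dx m f = Dx_fin m N f"
proof
  fix p
  have "Sum_any (\<lambda>r. p (W j (Suc r)) * pd (W j r) f p) = (\<Sum>r\<le>N. p (W j (Suc r)) * pd (W j r) f p)"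
    if "j \<in> {1..m}" for j
    by (rule Sum_any_fin) (use pd_zero_outside[OF assms] that in simp)
  then show "Dx m f p = Dx_fin m N f p"
    unfolding Dx_def Dx_fin_def by (intro arg_cong2[where f = "(+)"] refl sum.cong) auto
qed

lemma Dx_props:
  assumes "smooth_jet f" "dep m K f"
  shows "smooth_jet (Dx m f)" "dep m (Suc K) (Dx m f)"
proof -
  have "smooth_jet (Dx_fin m K f)"
    unfolding Dx_fin_def using assms(1) by (intro smooth_add smooth_sum smooth_mult smooth_pd smooth_coord)
  moreover have "dep m (Suc K) (Dx_fin m K f)"
    unfolding Dx_fin_def using assms(2)
    by (intro dep_add dep_sum dep_mult dep_coord dep_pd) (auto intro: dep_mono[of K "Suc K"])
  ultimately show "smooth_jet (Dx m f)" "dep m (Suc K) (Dx m f)"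
    using Dx_eq[OF assms(2)] by auto
qed

lemma Dxn_props:
  assumes "smooth_jet f" "dep m K f"
  shows "smooth_jet ((Dx m ^^ n) f) \<and> dep m (K + n) ((Dx m ^^ n) f)"
  by (induction n) (use assms Dx_props in auto)

lemma Dx_lin:
  assumes "smooth_jet f" "smooth_jet g" "dep m K f" "dep m K g"
  shows "Dx m (\<lambda>p. a * f p + b * g p) = (\<lambda>p. a * Dx m f p + b * Dx m g p)"
proof -
  have d: "dep m K (\<lambda>p. a * f p + b * g p)"
    using assms by (intro dep_add dep_mult dep_const) auto
  have pl: "pd c (\<lambda>p. a * f p + b * g p) = (\<lambda>p. a * pd c f p + b * pd c g p)" for c
    by (rule pd_lin) (use assms smooth_pdiff in auto)
  show ?thesis
    unfolding Dx_eq[OF d] Dx_eq[OF assms(3)] Dx_eq[OF assms(4)] Dx_fin_def pl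
    by (simp add: sum.distrib sum_distrib_left algebra_simps)
qed

lemma Dxn_lin:
  assumes "smooth_jet f" "smooth_jet g" "dep m K f" "dep m K g"
  shows "(Dx m ^^ n) (\<lambda>p. a * f p + b * g p) = (\<lambda>p. a * (Dx m ^^ n) f p + b * (Dx m ^^ n) g p)"
proof (induction n)
  case (Suc n)
  have "(Dx m ^^ Suc n) (\<lambda>p. a * f p + b * g p) = Dx m (\<lambda>p. a * (Dx m ^^ n) f p + b * (Dx m ^^ n) g p)"
    using Suc by simp
  also have "\<dots> = (\<lambda>p. a * (Dx m ^^ Suc n) f p + b * (Dx m ^^ Suc n) g p)"
    using Dxn_props[OF assms(1,3), of n] Dxn_props[OF assms(2,4), of n]
    by (simp add: Dx_lin[of _ _ m "K + n"])
  finally show ?case .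
qed simp

lemma Dx_zero [simp]: "Dx m (\<lambda>p. 0) = (\<lambda>p. 0)"
  unfolding Dx_def by simp

lemma Dxn_zero: "(Dx m ^^ n) (\<lambda>p. 0) = (\<lambda>p. 0)"
  by (induction n) simp_all

lemma EL_fin:
  assumes "dep m K f"
  shows "EL m j f = (\<lambda>p. \<Sum>r\<le>K. (-1) ^ r * (Dx m ^^ r) (pd (W j r) f) p)"
proof
  fix p
  have z: "pd (W j r) f = (\<lambda>p. 0)" if "r > K" for r
    using pd_zero_outside[OF assms] that by (auto simp: fun_eq_iff)
  show "EL m j f p = (\<Sum>r\<le>K. (-1) ^ r * (Dx m ^^ r) (pd (W j r) f) p)"
    unfolding EL_def by (rule Sum_any_fin) (simp add: z Dxn_zero)
qed

lemma EL_lin: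
  assumes "smooth_jet f" "smooth_jet g" "dep m K f" "dep m K g"
  shows "EL m j (\<lambda>p. a * f p + b * g p) = (\<lambda>p. a * EL m j f p + b * EL m j g p)"
proof -
  have d: "dep m K (\<lambda>p. a * f p + b * g p)"
    using assms by (intro dep_add dep_mult dep_const) auto
  have pl: "pd c (\<lambda>p. a * f p + b * g p) = (\<lambda>p. a * pd c f p + b * pd c g p)" for c
    by (rule pd_lin) (use assms smooth_pdiff in auto)
  have dl: "(Dx m ^^ n) (pd c (\<lambda>p. a * f p + b * g p)) =
      (\<lambda>p. a * (Dx m ^^ n) (pd c f) p + b * (Dx m ^^ n) (pd c g) p)" for n c
    unfolding pl by (rule Dxn_lin[of _ _ m K]) (use assms in \<open>auto intro: smooth_pd dep_pd\<close>)
  show ?thesis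
    unfolding EL_fin[OF d] EL_fin[OF assms(3)] EL_fin[OF assms(4)] dl
    by (simp add: sum.distrib sum_distrib_left algebra_simps)
qed

lemma pd_Dx_fin:
  assumes h: "smooth_jet h"
  shows "pd c (Dx_fin m N h) = (\<lambda>p. pd c (pd X h) p + (\<Sum>j=1..m. \<Sum>r\<le>N.
     (if c = W j (Suc r) then 1 else 0) * pd (W j r) h p + p (W j (Suc r)) * pd c (pd (W j r) h) p))"
proof -
  have pdh: "pdiff c (pd e h)" for e using smooth_pdiff[OF smooth_pd[OF h]] .
  have pt: "pdiff c (\<lambda>p. p (W j (Suc r)) * pd (W j r) h p)" for j r
    by (intro pdiff_mult pdiff_coord pdh)
  have "pd c (\<lambda>p. p (W j (Suc r)) * pd (W j r) h p) =
     (\<lambda>p. (if c = W j (Suc r) then 1 else 0) * pd (W j r) h p + p (W j (Suc r)) * pd c (pd (W j r) h) p)" for j r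
    by (subst pd_mult) (auto simp: pdh)
  then have "pd c (\<lambda>p. \<Sum>r\<le>N. p (W j (Suc r)) * pd (W j r) h p) =
     (\<lambda>p. \<Sum>r\<le>N. (if c = W j (Suc r) then 1 else 0) * pd (W j r) h p + p (W j (Suc r)) * pd c (pd (W j r) h) p)" for j
    by (subst pd_sum) (auto simp: pt)
  moreover have "pdiff c (\<lambda>p. \<Sum>r\<le>N. p (W j (Suc r)) * pd (W j r) h p)" for j
    by (intro pdiff_sum pt)
  ultimately show ?thesis
    unfolding Dx_fin_def by (subst pd_add) (auto simp: pdh pd_sum intro!: pdiff_sum)
qed

lemma pd_coefficient_sum:
  assumes B: "dep m K B" and j: "j \<in> {1..m}"
  shows "(\<Sum>i=1..m. \<Sum>s\<le>K. (if W j r = W i (Suc s) then 1 else 0) * pd (W i s) B p) =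
      (if r = 0 then 0 else pd (W j (r - 1)) B p)"
proof (cases r)
  case (Suc r')
  have "(\<Sum>i=1..m. \<Sum>s\<le>K. (if W j r = W i (Suc s) then 1 else 0) * pd (W i s) B p) =
        (\<Sum>i=1..m. \<Sum>s\<le>K. if i = j \<and> s = r' then pd (W i s) B p else 0)"
    using Suc by (intro sum.cong) auto
  also have "\<dots> = (\<Sum>i=1..m. if i = j then (if r' \<le> K then pd (W j r') B p else 0) else 0)"
    by (intro sum.cong refl) auto
  also have "\<dots> = (if r' \<le> K then pd (W j r') B p else 0)"
    using j by simp
  also have "\<dots> = pd (W j r') B p"
    using pd_zero_outside[OF B, of "W j r'"] by auto
  finally show ?thesis using Suc by simp
qed simp

lemma pd_Dx_comm:
  assumes B: "smooth_jet B" "dep m K B" and j: "j \<in> {1..m}"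
  shows "pd (W j r) (Dx m B) = (\<lambda>p. Dx m (pd (W j r) B) p + (if r = 0 then 0 else pd (W j (r - 1)) B p))"
proof
  fix p
  let ?c = "W j r"
  have sch: "pd ?c (pd e B) = pd e (pd ?c B)" for e by (rule schwarz[OF B(1)])
  have "pd ?c (Dx m B) p = pd X (pd ?c B) p + (\<Sum>i=1..m. \<Sum>s\<le>K.
     (if ?c = W i (Suc s) then 1 else 0) * pd (W i s) B p + p (W i (Suc s)) * pd (W i s) (pd ?c B) p)"
    unfolding Dx_eq[OF B(2)] pd_Dx_fin[OF B(1)] sch ..
  also have "\<dots> = Dx_fin m K (pd ?c B) p +
      (\<Sum>i=1..m. \<Sum>s\<le>K. (if ?c = W i (Suc s) then 1 else 0) * pd (W i s) B p)"
    unfolding Dx_fin_def by (simp add: sum.distrib)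
  also have "\<dots> = Dx m (pd ?c B) p + (if r = 0 then 0 else pd (W j (r - 1)) B p)"
    unfolding pd_coefficient_sum[OF B(2) j] Dx_eq[OF dep_pd[OF B(2)]] ..
  finally show "pd ?c (Dx m B) p = Dx m (pd ?c B) p + (if r = 0 then 0 else pd (W j (r - 1)) B p)" .
qed

(* For h of order s, (d/dx)^n h depends on w^i_{s+n} only through the term
   w^i_{s+n} \<partial>h/\<partial>w^i_s. *)
lemma pd_top_Dxn:
  assumes h: "smooth_jet h" "dep m s h" and i: "i \<in> {1..m}"
  shows "pd (W i (s + n)) ((Dx m ^^ n) h) = pd (W i s) h"
proof (induction n)
  case (Suc n)
  have hn: "smooth_jet ((Dx m ^^ n) h)" "dep m (s + n) ((Dx m ^^ n) h)"
    using Dxn_props[OF h, of n] by auto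
  have "pd (W i (Suc (s + n))) ((Dx m ^^ n) h) = (\<lambda>p. 0)"
    using pd_zero_outside[OF hn(2)] by auto
  then have "pd (W i (Suc (s + n))) (Dx m ((Dx m ^^ n) h)) = pd (W i (s + n)) ((Dx m ^^ n) h)"
    unfolding pd_Dx_comm[OF hn i] by simp
  then show ?case using Suc by simp
qed simp

lemma alternating_telescope:
  fixes a :: "nat \<Rightarrow> real"
  shows "(\<Sum>r\<le>N. (-1) ^ r * (a r + (if r = 0 then 0 else a (r - 1)))) = (-1) ^ N * a N"
  by (induction N) (auto simp: algebra_simps)

(* Total derivatives are null Lagrangians: e^j[d/dx B] = 0.  By the commutation rule
   the Euler-Lagrange sum telescopes. *)
lemma EL_Dx_zero:
  assumes B: "smooth_jet B" "dep m K B" and j: "j \<in> {1..m}"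
  shows "EL m j (Dx m B) = (\<lambda>p. 0)"
proof
  fix p
  define u where "u r = pd (W j r) B" for r
  have us: "smooth_jet (u r)" "dep m K (u r)" for r
    unfolding u_def using B by (auto intro: smooth_pd dep_pd)
  have "(Dx m ^^ r) (pd (W j r) (Dx m B)) p =
      (Dx m ^^ Suc r) (u r) p + (if r = 0 then 0 else (Dx m ^^ Suc (r - 1)) (u (r - 1)) p)" for r
  proof -
    have "pd (W j r) (Dx m B) = (\<lambda>p. 1 * Dx m (u r) p + 1 * (if r = 0 then (\<lambda>p. 0) else u (r - 1)) p)"
      unfolding pd_Dx_comm[OF B j] u_def by auto
    moreover have "smooth_jet (if r = 0 then (\<lambda>p. 0) else u (r - 1))"
      "dep m (Suc K) (if r = 0 then (\<lambda>p. 0) else u (r - 1))"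
      using us by (auto intro: dep_mono[of K])
    ultimately have "(Dx m ^^ r) (pd (W j r) (Dx m B)) =
        (\<lambda>p. 1 * (Dx m ^^ r) (Dx m (u r)) p + 1 * (Dx m ^^ r) (if r = 0 then (\<lambda>p. 0) else u (r - 1)) p)"
      using Dx_props[OF us] by (simp only:) (rule Dxn_lin[of _ _ m "Suc K"])
    then show ?thesis
      by (cases r) (simp_all only: funpow_Suc_right comp_def, auto simp: Dxn_zero)
  qed
  then have "EL m j (Dx m B) p =
      (\<Sum>r\<le>Suc K. (-1) ^ r * ((Dx m ^^ Suc r) (u r) p + (if r = 0 then 0 else (Dx m ^^ Suc (r - 1)) (u (r - 1)) p)))"
    unfolding EL_fin[OF Dx_props(2)[OF B]] by simp
  also have "\<dots> = (-1) ^ Suc K * (Dx m ^^ Suc (Suc K)) (u (Suc K)) p"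
    by (rule alternating_telescope[where a = "\<lambda>r. (Dx m ^^ Suc r) (u r) p"])
  also have "u (Suc K) = (\<lambda>p. 0)"
    unfolding u_def using pd_zero_outside[OF B(2)] by auto
  finally show "EL m j (Dx m B) p = 0" by (simp add: Dxn_zero)
qed

definition Dx_low :: "nat \<Rightarrow> nat \<Rightarrow> (jpt \<Rightarrow> real) \<Rightarrow> jpt \<Rightarrow> real" where
  "Dx_low m k B p = pd X B p + (\<Sum>l=1..m. \<Sum>r<k. p (W l (Suc r)) * pd (W l r) B p)"

lemma Dx_split_top:
  assumes "dep m k B"
  shows "Dx m B p = Dx_low m k B p + (\<Sum>l=1..m. p (W l (Suc k)) * pd (W l k) B p)"
  unfolding Dx_eq[OF assms] Dx_fin_def Dx_low_def
  by (simp add: lessThan_Suc_atMost[symmetric] sum.distrib)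

lemma dep_Dx_low: "dep m k B \<Longrightarrow> dep m k (Dx_low m k B)"
  unfolding Dx_low_def[abs_def] by (intro dep_add dep_sum dep_mult dep_coord dep_pd) auto

definition zeroset :: "coord set \<Rightarrow> jpt \<Rightarrow> jpt" where
  "zeroset Z p = (\<lambda>c. if c \<in> Z then 0 else p c)"

lemma zeroset_insert:
  "zeroset (insert c Z) p = zeroset Z (p(c := 0))"
  "zeroset (insert c Z) p = (zeroset Z p)(c := 0)"
  unfolding zeroset_def by auto

lemma zeroset_upd_out: "d \<notin> Z \<Longrightarrow> zeroset Z (p(d := t)) = (zeroset Z p)(d := t)"
  unfolding zeroset_def by auto

lemma zeroset_upd_in: "d \<in> Z \<Longrightarrow> zeroset Z (p(d := t)) = zeroset Z p"
  unfolding zeroset_def by auto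

lemma smooth_zeroset:
  assumes "finite Z" "smooth_jet f"
  shows "smooth_jet (\<lambda>p. f (zeroset Z p))"
  using assms(1)
proof (induction Z rule: finite_induct)
  case empty then show ?case using assms by (simp add: zeroset_def)
next
  case (insert c Z)
  show ?case unfolding zeroset_insert(1) by (rule smooth_subst_const[OF insert.IH])
qed

lemma dep_zeroset: "dep m K f \<Longrightarrow> dep m K (\<lambda>p. f (zeroset Z p))"
  by (rule depI, erule depD) (simp add: zeroset_def)

lemma pd_zeroset_out:
  assumes "pdiff d f" "d \<notin> Z"
  shows "pd d (\<lambda>p. f (zeroset Z p)) = (\<lambda>p. pd d f (zeroset Z p))"
proof (rule ext, rule pd_eqI)
  fix p
  show "((\<lambda>t. f (zeroset Z (p(d := t)))) has_field_derivative pd d f (zeroset Z p)) (at (p d))"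
    unfolding zeroset_upd_out[OF assms(2)] using pd_has[OF assms(1), of "zeroset Z p"] assms(2)
    by (simp add: zeroset_def)
qed

lemma pd_zeroset_in: "d \<in> Z \<Longrightarrow> pd d (\<lambda>p. f (zeroset Z p)) = (\<lambda>p. 0)"
  by (rule ext, rule pd_eqI) (simp add: zeroset_upd_in)

lemma inv_zeroset:
  assumes "finite Z" "\<And>c p. c \<in> Z \<Longrightarrow> g (p(c := 0)) = g p"
  shows "g (zeroset Z p) = g p"
  using assms
proof (induction Z arbitrary: p rule: finite_induct)
  case (insert c Z)
  have "g (zeroset (insert c Z) p) = g ((zeroset Z p)(c := 0))" unfolding zeroset_insert(2) ..
  also have "\<dots> = g (zeroset Z p)" by (rule insert.prems) (rule insertI1)
  also have "\<dots> = g p" using insert by simp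
  finally show ?case .
qed (simp add: zeroset_def)

lemma affine_zeroset:
  assumes Z: "finite Z" and f: "smooth_jet f"
    and H: "\<And>c d. c \<in> Z \<Longrightarrow> d \<in> Z \<Longrightarrow> pd d (pd c f) = (\<lambda>p. 0)"
  shows "\<And>c p. c \<in> Z \<Longrightarrow> pd c f (zeroset Z p) = pd c f p"
    and "f p = f (zeroset Z p) + (\<Sum>c\<in>Z. p c * pd c f p)"
proof -
  have const: "pd c f (p(d := t)) = pd c f p" if "c \<in> Z" "d \<in> Z" for c d p t
    by (rule const_coord[OF smooth_pdiff[OF smooth_pd[OF f]]]) (use H that in simp)
  have inv: "pd c f (zeroset Z' p) = pd c f p" if "c \<in> Z" "Z' \<subseteq> Z" for c Z' p
    by (rule inv_zeroset[OF finite_subset[OF that(2) Z]]) (use const that in blast)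
  then show "\<And>c p. c \<in> Z \<Longrightarrow> pd c f (zeroset Z p) = pd c f p" by blast
  have "f p = f (zeroset Z' p) + (\<Sum>c\<in>Z'. p c * pd c f p)" if "Z' \<subseteq> Z" for Z'
    using finite_subset[OF that Z] that
  proof (induction Z' rule: finite_induct)
    case (insert c Z')
    have cZ: "c \<in> Z" "Z' \<subseteq> Z" using insert by auto
    have "f (zeroset Z' p) = f ((zeroset Z' p)(c := 0)) + (zeroset Z' p) c * pd c f (zeroset Z' p)"
      by (rule affine_coord[OF smooth_pdiff[OF f]]) (rule const[OF cZ(1) cZ(1)])
    also have "\<dots> = f (zeroset (insert c Z') p) + p c * pd c f p"
      using insert(2) inv[OF cZ] by (simp add: zeroset_insert(2)) (simp add: zeroset_def)
    finally show ?case using insert cZ by simp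
  qed (simp add: zeroset_def)
  then show "f p = f (zeroset Z p) + (\<Sum>c\<in>Z. p c * pd c f p)" by blast
qed

definition top_coords :: "nat \<Rightarrow> nat \<Rightarrow> coord set" where
  "top_coords m k = (\<lambda>l. W l k) ` {1..m}"

lemma finite_top_coords [simp]: "finite (top_coords m k)"
  by (simp add: top_coords_def)

lemma sum_top_coords: "(\<Sum>c\<in>top_coords m k. g c) = (\<Sum>l=1..m. g (W l k))"
  unfolding top_coords_def by (subst sum.reindex) (auto intro: inj_onI)

lemma dep_zeroset_top: "dep m (Suc k) g \<Longrightarrow> dep m k (\<lambda>p. g (zeroset (top_coords m (Suc k)) p))"
proof (rule depI, erule depD)
  fix p q :: jpt and c assume "\<And>c. c \<in> jet_coords m k \<Longrightarrow> p c = q c" "c \<in> jet_coords m (Suc k)"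
  then show "zeroset (top_coords m (Suc k)) p c = zeroset (top_coords m (Suc k)) q c"
    unfolding zeroset_def top_coords_def jet_coords_def by (auto simp: le_Suc_eq)
qed

lemma dep_lower:
  assumes "dep m (Suc k) g" "\<And>p. g (zeroset (top_coords m (Suc k)) p) = g p"
  shows "dep m k g"
  using dep_zeroset_top[OF assms(1)] assms(2) by simp

section \<open>The Poincare lemma in the top variables\<close>

lemma ftc01:
  fixes \<phi> \<phi>' :: "real \<Rightarrow> real"
  assumes "\<And>t. (\<phi> has_field_derivative \<phi>' t) (at t)"
  shows "integral {0..1} \<phi>' = \<phi> 1 - \<phi> 0"
proof -
  have "(\<phi>' has_integral (\<phi> 1 - \<phi> 0)) {0..1::real}"
    by (rule fundamental_theorem_of_calculus)
       (auto simp: has_real_derivative_iff_has_vector_derivative[symmetric] intro: has_field_derivative_at_within assms)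
  then show ?thesis by (rule integral_unique)
qed

lemma line_deriv:
  assumes "pdiff c g"
  shows "((\<lambda>t. g (p(c := t * x))) has_field_derivative pd c g (p(c := t * x)) * x) (at t)"
  by (rule DERIV_chain2[OF pd_line[OF assms]]) (auto intro!: derivative_eq_intros)

lemma cont_line:
  assumes "smooth_jet g"
  shows "continuous_on S (\<lambda>t. g (p(c := t * x)))"
  by (rule cont_comp_smooth[OF assms], intro cont_upd continuous_on_const continuous_on_mult continuous_on_id)

lemma telescope_from:
  fixes F :: "nat \<Rightarrow> real"
  assumes "l \<in> {1..m}"
  shows "(\<Sum>i=1..m. if i < l then 0 else if i = l then F l else F i - F (i - 1)) = F m"
  using assms
proof (induction m)
  case (Suc n)
  show ?case
  proof (cases "l = Suc n")
    case True
    have "(\<Sum>i=1..n. if i < l then 0 else if i = l then F l else F i - F (i - 1)) = 0"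
      using True by (intro sum.neutral) auto
    then show ?thesis using True by simp
  next
    case False
    then show ?thesis using Suc by simp
  qed
qed simp

(* The potential is the classical homotopy formula
   B = \<Sum>_i w^i_s \<integral>_0^1 b_i(..., w^{i-1}_s, t w^i_s, 0, ..., 0) dt,
   which integrates the form along a path moving one variable at a time. *)
locale poincare_data =
  fixes m s :: nat and b :: "nat \<Rightarrow> jpt \<Rightarrow> real"
  assumes b_smooth: "\<And>l. l \<in> {1..m} \<Longrightarrow> smooth_jet (b l)"
    and b_dep: "\<And>l. l \<in> {1..m} \<Longrightarrow> dep m s (b l)"
    and b_closed: "\<And>i l. i \<in> {1..m} \<Longrightarrow> l \<in> {1..m} \<Longrightarrow> pd (W i s) (b l) = pd (W l s) (b i)"
begin

definition wtop :: "nat \<Rightarrow> coord" where "wtop i = W i s"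

definition later :: "nat \<Rightarrow> coord set" where "later i = wtop ` {Suc i..m}"

definition cut :: "nat \<Rightarrow> jpt \<Rightarrow> real" where "cut i p = b i (zeroset (later i) p)"

definition avg :: "nat \<Rightarrow> jpt \<Rightarrow> real" where
  "avg i = tpar_integral (\<lambda>q. cut i (tscale (wtop i) q))"

definition potential :: "jpt \<Rightarrow> real" where
  "potential p = (\<Sum>i=1..m. p (wtop i) * avg i p)"

lemma wtop_neq_tpar [simp]: "i \<in> {1..m} \<Longrightarrow> wtop i \<noteq> tpar"
  by (auto simp: wtop_def tpar_def)

lemma wtop_eq_iff [simp]: "wtop i = wtop l \<longleftrightarrow> i = l"
  by (simp add: wtop_def)

lemma wtop_in_later [simp]: "wtop l \<in> later i \<longleftrightarrow> Suc i \<le> l \<and> l \<le> m"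
  by (auto simp: later_def wtop_def)

lemma cut_smooth: "i \<in> {1..m} \<Longrightarrow> smooth_jet (cut i)"
  unfolding cut_def[abs_def] by (rule smooth_zeroset[OF _ b_smooth]) (simp_all add: later_def)

lemma cut_dep: "i \<in> {1..m} \<Longrightarrow> dep m s (cut i)"
  unfolding cut_def[abs_def] by (rule dep_zeroset[OF b_dep])

lemma avg_smooth: "i \<in> {1..m} \<Longrightarrow> smooth_jet (avg i)"
  unfolding avg_def
  by (intro smooth_tpar_integral smooth_tscale cut_smooth dep_tpar_free[OF cut_dep] wtop_neq_tpar)

(* Since cut_i does not involve the homotopy coordinate, avg_i is the integral of
   cut_i along the ray t \<mapsto> t w^i_s. *)
lemma avg_eq: "i \<in> {1..m} \<Longrightarrow> avg i p = integral {0..1} (\<lambda>t. cut i (p(wtop i := t * p (wtop i))))"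
  unfolding avg_def tpar_integral_def
  using tpar_free_tscale[OF dep_tpar_free[OF cut_dep] wtop_neq_tpar] by simp

lemma potential_smooth: "smooth_jet potential"
  unfolding potential_def[abs_def] by (intro smooth_sum smooth_mult smooth_coord avg_smooth) auto

lemma potential_dep: "dep m s potential"
proof -
  have "dep m s (avg i)" if i: "i \<in> {1..m}" for i
  proof (rule depI)
    fix p q :: jpt assume pq: "\<And>c. c \<in> jet_coords m s \<Longrightarrow> p c = q c"
    have "wtop i \<in> jet_coords m s" using i by (simp add: wtop_def)
    then have "cut i (p(wtop i := t * p (wtop i))) = cut i (q(wtop i := t * q (wtop i)))" for t
      by (intro depD[OF cut_dep[OF i]]) (use pq in auto)
    then show "avg i p = avg i q" unfolding avg_eq[OF i] by simp
  qed
  then show ?thesis unfolding potential_def[abs_def]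
    by (intro dep_sum dep_mult dep_coord) (auto simp: wtop_def)
qed

lemma pd_avg:
  assumes i: "i \<in> {1..m}" and l: "l \<in> {1..m}"
  shows "pd (wtop l) (avg i) p = integral {0..1} (\<lambda>t.
      if l = i then pd (wtop i) (cut i) (p(wtop i := t * p (wtop i))) * t
      else pd (wtop l) (cut i) (p(wtop i := t * p (wtop i))))"
proof -
  have hs: "smooth_jet (cut i)" "tpar_free (cut i)" using cut_smooth[OF i] dep_tpar_free[OF cut_dep[OF i]] by auto
  have der: "pd (wtop l) (\<lambda>q. cut i (tscale (wtop i) q)) q =
      (if l = i then pd (wtop i) (cut i) (tscale (wtop i) q) * q tpar else pd (wtop l) (cut i) (tscale (wtop i) q))" for q
    using tscale_derivs[OF smooth_pdiff[OF hs(1)] hs(2) wtop_neq_tpar[OF i], of q "wtop l"] wtop_neq_tpar[OF l]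
    by (intro pd_eqI) simp
  have "tpar_free (pd e (cut i))" for e by (rule tpar_free_pd[OF hs(2)])
  then have "pd (wtop l) (\<lambda>q. cut i (tscale (wtop i) q)) (p(tpar := t)) =
      (if l = i then pd (wtop i) (cut i) (p(wtop i := t * p (wtop i))) * t
       else pd (wtop l) (cut i) (p(wtop i := t * p (wtop i))))" for t
    unfolding der using tpar_free_tscale[OF _ wtop_neq_tpar[OF i]] by simp
  then show ?thesis
    unfolding avg_def pd_tpar_integral[OF smooth_tscale[OF hs wtop_neq_tpar[OF i]] wtop_neq_tpar[OF l]]
      tpar_integral_def by simp
qed

lemma pd_term:
  assumes i: "i \<in> {1..m}"
  shows "pd (wtop l) (\<lambda>p. p (wtop i) * avg i p) p =
    (if l = i then 1 else 0) * avg i p + p (wtop i) * pd (wtop l) (avg i) p"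
  by (subst pd_mult) (auto intro: smooth_pdiff avg_smooth[OF i] simp: wtop_def)

(* The diagonal term: d/dw (w \<integral>_0^1 cut_i(t w) dt) = \<integral>_0^1 d/dt (t cut_i(t w)) dt. *)
lemma term_same:
  assumes i: "i \<in> {1..m}"
  shows "pd (wtop i) (\<lambda>p. p (wtop i) * avg i p) p = cut i p"
proof -
  define x where "x = p (wtop i)"
  define \<phi> where "\<phi> t = cut i (p(wtop i := t * x))" for t
  define \<psi> where "\<psi> t = pd (wtop i) (cut i) (p(wtop i := t * x)) * t" for t
  have hs: "smooth_jet (cut i)" using cut_smooth[OF i] .
  have c1: "continuous_on {0..1} \<phi>" unfolding \<phi>_def by (rule cont_line[OF hs])
  have c2: "continuous_on {0..1} (\<lambda>t. \<psi> t * x)"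
    unfolding \<psi>_def by (intro continuous_on_mult continuous_on_id continuous_on_const cont_line smooth_pd hs)
  have "pd (wtop i) (\<lambda>p. p (wtop i) * avg i p) p = avg i p + x * pd (wtop i) (avg i) p"
    using pd_term[OF i, of i p] by (simp add: x_def)
  also have "\<dots> = integral {0..1} \<phi> + x * integral {0..1} \<psi>"
    unfolding avg_eq[OF i, of p] pd_avg[OF i i] by (simp add: x_def \<phi>_def[abs_def] \<psi>_def[abs_def])
  also have "\<dots> = integral {0..1} \<phi> + integral {0..1} (\<lambda>t. \<psi> t * x)"
    by (simp add: mult.commute)
  also have "\<dots> = integral {0..1} (\<lambda>t. \<phi> t + \<psi> t * x)"
    by (rule integral_add[symmetric]) (use c1 c2 integrable_continuous_interval in blast)+
  also have "\<dots> = 1 * \<phi> 1 - 0 * \<phi> 0"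
  proof (rule ftc01)
    fix t
    show "((\<lambda>t. t * \<phi> t) has_field_derivative \<phi> t + \<psi> t * x) (at t)"
      unfolding \<phi>_def \<psi>_def
      by (rule DERIV_cong[OF DERIV_mult[OF DERIV_ident line_deriv[OF smooth_pdiff[OF hs]]]])
         (simp add: algebra_simps)
  qed
  also have "\<dots> = cut i p" by (simp add: \<phi>_def x_def)
  finally show ?thesis .
qed

lemma term_above:
  assumes i: "i \<in> {1..m}" and l: "l \<in> {1..m}" and li: "i < l"
  shows "pd (wtop l) (\<lambda>p. p (wtop i) * avg i p) p = 0"
proof -
  have "pd (wtop l) (cut i) = (\<lambda>p. 0)"
    unfolding cut_def[abs_def] by (rule pd_zeroset_in) (use li l in simp)
  then show ?thesis unfolding pd_term[OF i] pd_avg[OF i l] using li by simp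
qed

(* An earlier variable w^l_s (l < i): by closedness the derivative of the i-th term is the
   difference of b_l with the variables later than i, resp. than i - 1, set to zero. *)
lemma term_below:
  assumes i: "i \<in> {1..m}" and l: "l \<in> {1..m}" and li: "l < i"
  shows "pd (wtop l) (\<lambda>p. p (wtop i) * avg i p) p = b l (zeroset (later i) p) - b l (zeroset (later (i - 1)) p)"
proof -
  define x where "x = p (wtop i)"
  define g where "g q = b l (zeroset (later i) q)" for q
  have gs: "smooth_jet g" unfolding g_def[abs_def] by (rule smooth_zeroset[OF _ b_smooth[OF l]]) (simp add: later_def)
  have nl: "wtop l \<notin> later i" and ni: "wtop i \<notin> later i" using li by auto
  have eq: "pd (wtop l) (cut i) q = pd (wtop i) g q" for q
  proof -
    have "pd (wtop l) (cut i) q = pd (wtop l) (b i) (zeroset (later i) q)"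
      unfolding cut_def[abs_def] by (rule fun_cong[OF pd_zeroset_out[OF smooth_pdiff[OF b_smooth[OF i]] nl]])
    also have "\<dots> = pd (wtop i) (b l) (zeroset (later i) q)"
      using b_closed[OF i l] by (simp add: wtop_def)
    also have "\<dots> = pd (wtop i) g q"
      unfolding g_def[abs_def] by (rule fun_cong[OF pd_zeroset_out[OF smooth_pdiff[OF b_smooth[OF l]] ni], symmetric])
    finally show ?thesis .
  qed
  have "pd (wtop l) (\<lambda>p. p (wtop i) * avg i p) p = x * integral {0..1} (\<lambda>t. pd (wtop i) g (p(wtop i := t * x)))"
    unfolding pd_term[OF i] pd_avg[OF i l] eq x_def using li by simp
  also have "\<dots> = integral {0..1} (\<lambda>t. pd (wtop i) g (p(wtop i := t * x)) * x)"
    by (simp add: mult.commute)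
  also have "\<dots> = g (p(wtop i := 1 * x)) - g (p(wtop i := 0 * x))"
    by (rule ftc01[where \<phi> = "\<lambda>t. g (p(wtop i := t * x))"]) (rule line_deriv[OF smooth_pdiff[OF gs]])
  also have "\<dots> = b l (zeroset (later i) p) - b l (zeroset (later (i - 1)) p)"
  proof -
    have "later (i - 1) = insert (wtop i) (later i)" using i by (auto simp: later_def)
    then show ?thesis by (simp add: g_def x_def zeroset_insert(1))
  qed
  finally show ?thesis .
qed

(* Summing the three cases, the derivatives telescope to b_l. *)
lemma potential_pd:
  assumes l: "l \<in> {1..m}"
  shows "pd (wtop l) potential = b l"
proof
  fix p
  define F where "F i = b l (zeroset (later i) p)" for i
  have "pdiff (wtop l) (\<lambda>p. p (wtop i) * avg i p)" if "i \<in> {1..m}" for i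
    using smooth_pdiff[OF avg_smooth[OF that]] by (intro pdiff_mult pdiff_coord)
  then have "pd (wtop l) potential p = (\<Sum>i=1..m. pd (wtop l) (\<lambda>p. p (wtop i) * avg i p) p)"
    unfolding potential_def[abs_def] by (subst pd_sum) auto
  also have "\<dots> = (\<Sum>i=1..m. if i < l then 0 else if i = l then F l else F i - F (i - 1))"
    using term_above[OF _ l] term_same term_below[OF _ l]
    by (intro sum.cong refl) (auto simp: F_def cut_def)
  also have "\<dots> = F m" by (rule telescope_from[OF l])
  also have "F m = b l p" by (simp add: F_def later_def zeroset_def)
  finally show "pd (wtop l) potential p = b l p" .
qed

end

lemma poincare:
  fixes m s :: nat and b :: "nat \<Rightarrow> jpt \<Rightarrow> real"
  assumes "\<And>l. l \<in> {1..m} \<Longrightarrow> smooth_jet (b l)"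
    and "\<And>l. l \<in> {1..m} \<Longrightarrow> dep m s (b l)"
    and "\<And>i l. i \<in> {1..m} \<Longrightarrow> l \<in> {1..m} \<Longrightarrow> pd (W i s) (b l) = pd (W l s) (b i)"
  shows "\<exists>B. smooth_jet B \<and> dep m s B \<and> (\<forall>l\<in>{1..m}. pd (W l s) B = b l)"
proof -
  interpret poincare_data m s b using assms by unfold_locales auto
  show ?thesis using potential_smooth potential_dep potential_pd unfolding wtop_def by blast
qed

section \<open>Lowering the order of a Lagrangian\<close>

(* In e^j[f], for f of order K, the derivative in w^i_{K+n} only receives contributions
   from the terms with r \<ge> n, since (d/dx)^r \<partial>f/\<partial>w^j_r has order K + r. *)
lemma pd_EL_high:
  assumes f: "smooth_jet f" "dep m K f"
  shows "pd (W i (K + n)) (EL m j f) p = (\<Sum>r\<in>{n..K}. (-1) ^ r * pd (W i (K + n)) ((Dx m ^^ r) (pd (W j r) f)) p)"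
proof -
  let ?t = "\<lambda>r. (Dx m ^^ r) (pd (W j r) f)"
  have t: "smooth_jet (?t r)" "dep m (K + r) (?t r)" for r
    using Dxn_props[OF smooth_pd[OF f(1)] dep_pd[OF f(2)]] by auto
  have pdiff_t: "pdiff c (\<lambda>p. (-1) ^ r * ?t r p)" for c r
    using smooth_pdiff[OF t(1)] by (intro pdiff_mult pdiff_const)
  have "pd (W i (K + n)) (EL m j f) p = (\<Sum>r\<le>K. pd (W i (K + n)) (\<lambda>p. (-1) ^ r * ?t r p) p)"
    unfolding EL_fin[OF f(2)] by (subst pd_sum) (auto intro: pdiff_t)
  also have "\<dots> = (\<Sum>r\<le>K. (-1) ^ r * pd (W i (K + n)) (?t r) p)"
    using smooth_pdiff[OF t(1)] by (simp add: pd_mult)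
  also have "\<dots> = (\<Sum>r\<in>{n..K}. (-1) ^ r * pd (W i (K + n)) (?t r) p)"
    using pd_zero_outside[OF t(2)] by (intro sum.mono_neutral_right) auto
  finally show ?thesis .
qed

(* If e^j[f] has order < 2k for f of order k, its w^i_{2k}-coefficient
   (-1)^k \<partial>^2 f/\<partial>w^i_k \<partial>w^j_k vanishes. *)
lemma top_second_derivatives_vanish:
  assumes f: "smooth_jet f" "dep m k f" and EL: "dep m S (EL m j f)" and Sk: "S < 2 * k"
    and i: "i \<in> {1..m}"
  shows "pd (W i k) (pd (W j k) f) = (\<lambda>p. 0)"
proof
  fix p
  have "(-1) ^ k * pd (W i k) (pd (W j k) f) p = pd (W i (k + k)) (EL m j f) p"
    using pd_top_Dxn[OF smooth_pd[OF f(1)] dep_pd[OF f(2)] i, of k] by (simp add: pd_EL_high[OF f])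
  also have "\<dots> = 0" by (rule pd_zero_outside[OF EL]) (use Sk in simp)
  finally show "pd (W i k) (pd (W j k) f) p = 0" by simp
qed

(* If e^j[f] has order \<le> 2k for f of order k + 1 whose top coefficients
   \<partial>f/\<partial>w^j_{k+1} have order k, its w^i_{2k+1}-coefficient shows that the 1-form
   \<Sum>_j \<partial>f/\<partial>w^j_{k+1} dw^j_k is closed. *)
lemma top_coefficients_closed:
  assumes f: "smooth_jet f" "dep m (Suc k) f" and EL: "dep m S (EL m j f)" and Sk: "S \<le> 2 * k"
    and i: "i \<in> {1..m}" and top_j: "dep m k (pd (W j (Suc k)) f)"
  shows "pd (W i k) (pd (W j (Suc k)) f) = pd (W j k) (pd (W i (Suc k)) f)"
proof
  fix p
  have low: "pd (W i (Suc k + k)) ((Dx m ^^ k) (pd (W j k) f)) = pd (W i (Suc k)) (pd (W j k) f)"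
    using pd_top_Dxn[OF smooth_pd[OF f(1)] dep_pd[OF f(2)] i, of k] .
  have high: "pd (W i (Suc k + k)) ((Dx m ^^ Suc k) (pd (W j (Suc k)) f)) = pd (W i k) (pd (W j (Suc k)) f)"
    using pd_top_Dxn[OF smooth_pd[OF f(1)] top_j i, of "Suc k"] by (simp add: add.commute)
  have "(-1) ^ k * (pd (W i (Suc k)) (pd (W j k) f) p - pd (W i k) (pd (W j (Suc k)) f) p) =
      pd (W i (Suc k + k)) (EL m j f) p"
    unfolding pd_EL_high[OF f] using low high by (simp add: atLeastAtMostSuc_conv algebra_simps)
  also have "\<dots> = 0" by (rule pd_zero_outside[OF EL]) (use Sk in simp)
  finally show "pd (W i k) (pd (W j (Suc k)) f) p = pd (W j k) (pd (W i (Suc k)) f) p"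
    using schwarz[OF f(1), of "W i (Suc k)" "W j k"] by simp
qed

lemma affine_in_top:
  assumes f: "smooth_jet f" "dep m (Suc k) f" and EL: "\<forall>j\<in>{1..m}. dep m S (EL m j f)"
    and Sk: "S < 2 * Suc k"
  shows "order_le m k (\<lambda>p. f (zeroset (top_coords m (Suc k)) p))"
    and "\<forall>l\<in>{1..m}. order_le m k (pd (W l (Suc k)) f)"
    and "f = (\<lambda>p. f (zeroset (top_coords m (Suc k)) p) + (\<Sum>l=1..m. pd (W l (Suc k)) f p * p (W l (Suc k))))"
proof -
  let ?Z = "top_coords m (Suc k)"
  have H: "pd d (pd c f) = (\<lambda>p. 0)" if cd: "c \<in> ?Z" "d \<in> ?Z" for c d
  proof -
    obtain i j where ij: "i \<in> {1..m}" "j \<in> {1..m}" "c = W j (Suc k)" "d = W i (Suc k)"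
      using cd unfolding top_coords_def by blast
    show ?thesis
      unfolding ij(3,4) by (rule top_second_derivatives_vanish[OF f bspec[OF EL ij(2)] Sk ij(1)])
  qed
  note affine = affine_zeroset[OF finite_top_coords f(1) H]
  show "order_le m k (\<lambda>p. f (zeroset ?Z p))"
    unfolding order_le_iff using smooth_zeroset[OF _ f(1)] dep_zeroset_top[OF f(2)] by simp
  show "f = (\<lambda>p. f (zeroset ?Z p) + (\<Sum>l=1..m. pd (W l (Suc k)) f p * p (W l (Suc k))))"
  proof
    fix p
    have "(\<Sum>c\<in>?Z. p c * pd c f p) = (\<Sum>l=1..m. pd (W l (Suc k)) f p * p (W l (Suc k)))"
      unfolding sum_top_coords by (simp add: mult.commute)
    then show "f p = f (zeroset ?Z p) + (\<Sum>l=1..m. pd (W l (Suc k)) f p * p (W l (Suc k)))"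
      using affine(2)[where p = p] by simp
  qed
  show "\<forall>l\<in>{1..m}. order_le m k (pd (W l (Suc k)) f)"
  proof
    fix l assume "l \<in> {1..m}"
    then have "W l (Suc k) \<in> ?Z" by (simp add: top_coords_def)
    then have "dep m k (pd (W l (Suc k)) f)"
      by (intro dep_lower[OF dep_pd[OF f(2)]] affine(1))
    then show "order_le m k (pd (W l (Suc k)) f)"
      unfolding order_le_iff using smooth_pd[OF f(1)] by blast
  qed
qed

(* One step of the reduction: if e^j[f] has order \<le> 2k for f of order k + 1, then
   subtracting a total derivative gives a Lagrangian of order k with the same
   Euler-Lagrange expressions. *)
lemma order_reduction_step:
  assumes f: "smooth_jet f" "dep m (Suc k) f" and EL: "\<forall>j\<in>{1..m}. dep m S (EL m j f)"
    and Sk: "S \<le> 2 * k"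
  shows "\<exists>f'. smooth_jet f' \<and> dep m k f' \<and> (\<forall>j\<in>{1..m}. EL m j f' = EL m j f)"
proof -
  define a where "a p = f (zeroset (top_coords m (Suc k)) p)" for p
  define b where "b l = pd (W l (Suc k)) f" for l
  have Sk': "S < 2 * Suc k" using Sk by simp
  have a: "dep m k a" and b: "\<And>l. l \<in> {1..m} \<Longrightarrow> smooth_jet (b l) \<and> dep m k (b l)"
    using affine_in_top(1,2)[OF f EL Sk'] unfolding a_def[abs_def] b_def order_le_iff by auto
  have f_eq: "f p = a p + (\<Sum>l=1..m. p (W l (Suc k)) * b l p)" for p
    by (subst affine_in_top(3)[OF f EL Sk']) (simp add: a_def b_def mult.commute)
  have "pd (W i k) (b l) = pd (W l k) (b i)" if "i \<in> {1..m}" "l \<in> {1..m}" for i l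
    unfolding b_def using top_coefficients_closed[OF f _ Sk] that EL b by (auto simp: b_def)
  then obtain B where B: "smooth_jet B" "dep m k B" "\<And>l. l \<in> {1..m} \<Longrightarrow> pd (W l k) B = b l"
    using poincare[of m b k] b by blast
  note DB = Dx_props[OF B(1,2)]
  define f' where "f' p = 1 * f p + (-1) * Dx m B p" for p
  have "smooth_jet f'" unfolding f'_def[abs_def] using f DB by (intro smooth_add smooth_mult) auto
  moreover have "EL m j f' = EL m j f" if "j \<in> {1..m}" for j
    unfolding f'_def[abs_def] EL_lin[OF f(1) DB(1) f(2) DB(2)] EL_Dx_zero[OF B(1,2) that] by simp
  moreover have "dep m k f'"
  proof -
    have "f' = (\<lambda>p. a p - Dx_low m k B p)"
      unfolding f'_def f_eq Dx_split_top[OF B(2)] using B(3) by (auto simp: fun_eq_iff)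
    then show ?thesis using dep_diff[OF a dep_Dx_low[OF B(2)]] by simp
  qed
  ultimately show ?thesis by blast
qed

lemma order_reduction:
  assumes "smooth_jet f" "dep m k f" "\<forall>j\<in>{1..m}. dep m S (EL m j f)" "S \<le> 2 * L"
  shows "\<exists>f'. order_le m L f' \<and> (\<forall>j\<in>{1..m}. EL m j f' = EL m j f)"
  using assms(1-3)
proof (induction k arbitrary: f)
  case 0
  then show ?case unfolding order_le_iff using dep_mono[of 0 L] by blast
next
  case (Suc k)
  show ?case
  proof (cases "Suc k \<le> L")
    case True
    then show ?thesis unfolding order_le_iff using Suc.prems dep_mono[of "Suc k" L] by blast
  next
    case False
    then have "S \<le> 2 * k" using assms(4) by simp
    then obtain f' where f': "smooth_jet f'" "dep m k f'" "\<forall>j\<in>{1..m}. EL m j f' = EL m j f"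
      using order_reduction_step[OF Suc.prems] by blast
    then obtain g where "order_le m L g" "\<forall>j\<in>{1..m}. EL m j g = EL m j f'"
      using Suc.IH[of f'] Suc.prems(3) by auto
    then show ?thesis using f'(3) by auto
  qed
qed

theorem mainTheorem9:
  fixes m S :: nat and f :: "jpt \<Rightarrow> real"
  assumes "finite_order m f"
    and "\<forall>j\<in>{1..m}. order_le m S (EL m j f)"
  shows "(\<forall>K. S = 2 * K \<longrightarrow>
            (\<exists>g. order_le m K g \<and> (\<forall>j\<in>{1..m}. EL m j g = EL m j f)))
       \<and> (\<forall>K. S = 2 * K + 1 \<longrightarrow>
            (\<exists>g0 gs. order_le m K g0 \<and> (\<forall>k\<in>{1..m}. order_le m K (gs k)) \<and>
               (\<forall>j\<in>{1..m}. EL m j f =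
                  EL m j (\<lambda>p. g0 p + (\<Sum>k=1..m. gs k p * p (W k (K + 1)))))))"
proof -
  obtain k where f: "smooth_jet f" "dep m k f"
    using assms(1) unfolding finite_order_def order_le_iff by blast
  have EL: "\<forall>j\<in>{1..m}. dep m S (EL m j f)" using assms(2) unfolding order_le_iff by blast
  have even: "\<exists>g. order_le m K g \<and> (\<forall>j\<in>{1..m}. EL m j g = EL m j f)" if "S = 2 * K" for K
    using order_reduction[OF f EL] that by simp
  (* S = 2K + 1: reduce the order to K + 1; the result is affine in the w^l_{K+1} *)
  have odd: "\<exists>g0 gs. order_le m K g0 \<and> (\<forall>k\<in>{1..m}. order_le m K (gs k)) \<and>
      (\<forall>j\<in>{1..m}. EL m j f = EL m j (\<lambda>p. g0 p + (\<Sum>k=1..m. gs k p * p (W k (K + 1)))))"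
    if S: "S = 2 * K + 1" for K
  proof -
    obtain f' where f': "smooth_jet f'" "dep m (Suc K) f'" and same: "\<forall>j\<in>{1..m}. EL m j f' = EL m j f"
      using order_reduction[OF f EL, of "Suc K"] S unfolding order_le_iff by auto
    have EL': "\<forall>j\<in>{1..m}. dep m S (EL m j f')" using same EL by simp
    have "S < 2 * Suc K" using S by simp
    note affine = affine_in_top[OF f' EL' this]
    show ?thesis
      using affine(1,2) same affine(3)[symmetric]
      by (intro exI[of _ "\<lambda>p. f' (zeroset (top_coords m (Suc K)) p)"] exI[of _ "\<lambda>l. pd (W l (Suc K)) f'"]) simp
  qed
  show ?thesis using even odd by blast
qed

end
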